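(* Let $k\ge3$ and let $B$ be a bipartite graph with left vertex set $I$ and right vertex set $J$, left-regular of degree $k$ and with right degree $O(k)$. The graph $G=G(B)$ (constructed explicitly from $B$ as described in the context) has $O(k^4|I|)$ vertices and maximum vertex degree $O(k^2)$, and $G$ is $k$-colourable if and only if it is possible to map the pigeons $I$ to holes in $J$, each pigeon $i$ to a hole in $J_i$, in a one-to-one fashion, i.e., if and only if the equations $$\sum_{j\in J_i} p_{i,j}=1\ (i\in I),\qquad p_{i,j}p_{i,j'}=0\ (i\in I,\ j\neq j'\in J_i),\qquad p_{i,j}p_{i',j}=0\ (i\neq i'\in I,\ j\in J_i\cap J_{i'})$$ are simultaneously satisfiable over $\{0,1\}$.
   Context: $J_i$ is the set of $k$ neighbours of pigeon $i$ in $B$. Construction: for each pigeon $i$ fix an enumeration of its $k$ edges by $1,\dots,k$. For every pair of distinct pigeons $i\ne i'$ and $c,c'\in[k]$ such that the $c$th edge of $i$ and the $c'$th edge of $i'$ lead to the same hole, add a gadget: two disjoint $k$-cliques $l_1,\dots,l_k$ and $r_1,\dots,r_k$; edge $\{i,l_1\}$; a new vertex pre-coloured $c$ adjacent to $l_2,\dots,l_{k-1}$; edge $\{i',r_1\}$; a new vertex pre-coloured $c'$ adjacent to $r_2,\dots,r_{k-1}$; if $c=c'$ add edge $\{l_k,r_k\}$, otherwise identify $l_k$ with $r_k$. Pigeon vertices are shared among gadgets, all other vertices are new. Call the union $\widehat{G}$. Then take new vertices $z_1,\dots,z_M$ with $M=O(k^3|I|)$ large enough, and make every set of $k$ consecutive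 vertices $\{z_t,\dots,z_{t+k-1}\}$ a $k$-clique. Process the pre-coloured vertices of $\widehat{G}$ one by one: a vertex pre-coloured $c$ is identified with the first vertex $z_t$ with $t\equiv c \pmod k$ not yet used. The resulting graph, with no pre-colouring, is $G(B)$. $k$-colourable means having a map to $[k]$ with distinct colours on the endpoints of every edge. *)

theory Defs
  imports Main
begin

text \<open>Bipartite graph B: pigeons I (finite set of naturals), holes J, and the
neighbourhood J_i of pigeon i given by N i.  The enumeration of the k edges of
pigeon i is e i :: nat => nat (a bijection from {1..k} onto N i).\<close>

type_synonym gidx = "nat \<times> nat \<times> nat \<times> nat"

datatype vert =
    Pig nat
  | Lv gidx nat
  | Rv gidx nat
  | PLv gidx           \<comment> \<open>vertex pre-coloured c adjacent to l_2..l_(k-1)\<close>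
  | PRv gidx           \<comment> \<open>vertex pre-coloured c' adjacent to r_2..r_(k-1)\<close>
  | Zv nat

definition gadgets :: "nat set \<Rightarrow> (nat \<Rightarrow> nat \<Rightarrow> nat) \<Rightarrow> nat \<Rightarrow> gidx set" where
  "gadgets I e k = {(i, c, i', c'). i \<in> I \<and> i' \<in> I \<and> i \<noteq> i' \<and>
       c \<in> {1..k} \<and> c' \<in> {1..k} \<and> e i c = e i' c'}"

definition precol :: "nat set \<Rightarrow> (nat \<Rightarrow> nat \<Rightarrow> nat) \<Rightarrow> nat \<Rightarrow> vert set" where
  "precol I e k = PLv ` gadgets I e k \<union> PRv ` gadgets I e k"

fun pcol :: "vert \<Rightarrow> nat" where
  "pcol (PLv (i, c, i', c')) = c"
| "pcol (PRv (i, c, i', c')) = c'"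
| "pcol _ = 0"

text \<open>Number of z-vertices: M = k * (number of pre-coloured vertices), which is
O(k^3 |I|) and large enough.\<close>
definition Mz :: "nat set \<Rightarrow> (nat \<Rightarrow> nat \<Rightarrow> nat) \<Rightarrow> nat \<Rightarrow> nat" where
  "Mz I e k = k * card (precol I e k)"

text \<open>Processing the pre-coloured vertices in the order of the list os: a vertex
pre-coloured c goes to the first unused z_t with t = c (mod k), i.e. to
t = c + k * (number of earlier processed vertices of colour c).\<close>
definition zidx :: "nat \<Rightarrow> vert list \<Rightarrow> vert \<Rightarrow> nat" where
  "zidx k os v = pcol v + k * length (filter (\<lambda>u. pcol u = pcol v) (takeWhile (\<lambda>u. u \<noteq> v) os))"

text \<open>Identification map: r_k is identified with l_k when c ~= c'; pre-coloured
vertices are identified with z-vertices.\<close>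
fun collapse :: "nat \<Rightarrow> vert list \<Rightarrow> vert \<Rightarrow> vert" where
  "collapse k os (Rv (i, c, i', c') a) = (if c \<noteq> c' \<and> a = k then Lv (i, c, i', c') k else Rv (i, c, i', c') a)"
| "collapse k os (PLv g) = Zv (zidx k os (PLv g))"
| "collapse k os (PRv g) = Zv (zidx k os (PRv g))"
| "collapse k os v = v"

definition raw_verts :: "nat set \<Rightarrow> (nat \<Rightarrow> nat \<Rightarrow> nat) \<Rightarrow> nat \<Rightarrow> vert set" where
  "raw_verts I e k =
     Pig ` I
   \<union> {Lv g a | g a. g \<in> gadgets I e k \<and> a \<in> {1..k}}
   \<union> {Rv g a | g a. g \<in> gadgets I e k \<and> a \<in> {1..k}}
   \<union> precol I e k
   \<union> {Zv t | t. t \<in> {1..Mz I e k}}"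

definition gadget_edges :: "nat \<Rightarrow> gidx \<Rightarrow> (vert \<times> vert) set" where
  "gadget_edges k g = (case g of (i, c, i', c') \<Rightarrow>
       {(Lv g a, Lv g b) | a b. 1 \<le> a \<and> a < b \<and> b \<le> k}
     \<union> {(Rv g a, Rv g b) | a b. 1 \<le> a \<and> a < b \<and> b \<le> k}
     \<union> {(Pig i, Lv g 1)}
     \<union> {(PLv g, Lv g a) | a. 2 \<le> a \<and> a \<le> k - 1}
     \<union> {(Pig i', Rv g 1)}
     \<union> {(PRv g, Rv g a) | a. 2 \<le> a \<and> a \<le> k - 1}
     \<union> (if c = c' then {(Lv g k, Rv g k)} else {}))"

definition z_edges :: "nat \<Rightarrow> nat \<Rightarrow> (vert \<times> vert) set" where
  "z_edges k M = {(Zv a, Zv b) | a b t. 1 \<le> t \<and> t + k - 1 \<le> M \<and> t \<le> a \<and> a < b \<and> b \<le> t + k - 1}"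

definition raw_edges :: "nat set \<Rightarrow> (nat \<Rightarrow> nat \<Rightarrow> nat) \<Rightarrow> nat \<Rightarrow> (vert \<times> vert) set" where
  "raw_edges I e k = (\<Union>g \<in> gadgets I e k. gadget_edges k g) \<union> z_edges k (Mz I e k)"

text \<open>The graph G(B): vertices and (undirected, listed in one orientation) edges.\<close>
definition G_verts :: "nat set \<Rightarrow> (nat \<Rightarrow> nat \<Rightarrow> nat) \<Rightarrow> nat \<Rightarrow> vert list \<Rightarrow> vert set" where
  "G_verts I e k os = collapse k os ` raw_verts I e k"

definition G_edges :: "nat set \<Rightarrow> (nat \<Rightarrow> nat \<Rightarrow> nat) \<Rightarrow> nat \<Rightarrow> vert list \<Rightarrow> (vert \<times> vert) set" where
  "G_edges I e k os = (\<lambda>(u, v). (collapse k os u, collapse k os v)) ` raw_edges I e k"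

definition vdegree :: "(vert \<times> vert) set \<Rightarrow> vert \<Rightarrow> nat" where
  "vdegree E v = card {w. (v, w) \<in> E \<or> (w, v) \<in> E}"

definition k_colourable :: "nat \<Rightarrow> vert set \<Rightarrow> (vert \<times> vert) set \<Rightarrow> bool" where
  "k_colourable k V E \<longleftrightarrow> (\<exists>f :: vert \<Rightarrow> nat. (\<forall>v \<in> V. f v \<in> {1..k}) \<and> (\<forall>(u, v) \<in> E. f u \<noteq> f v))"

definition php_sat :: "nat set \<Rightarrow> (nat \<Rightarrow> nat set) \<Rightarrow> bool" where
  "php_sat I N \<longleftrightarrow> (\<exists>p :: nat \<Rightarrow> nat \<Rightarrow> int.
      (\<forall>i \<in> I. \<forall>j \<in> N i. p i j \<in> {0, 1})
    \<and> (\<forall>i \<in> I. (\<Sum>j \<in> N i. p i j) = 1)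
    \<and> (\<forall>i \<in> I. \<forall>j \<in> N i. \<forall>j' \<in> N i. j \<noteq> j' \<longrightarrow> p i j * p i j' = 0)
    \<and> (\<forall>i \<in> I. \<forall>i' \<in> I. \<forall>j \<in> N i \<inter> N i'. i \<noteq> i' \<longrightarrow> p i j * p i' j = 0))"

end

(*
  In a k-colouring of G the z-vertices carry overlapping k-cliques, so their colours are
  k-periodic: every vertex pre-coloured c gets one colour pi(c), and pi permutes the colours.
  In the gadget of (i, c, i', c'), if pigeon i has colour pi(c), then the k-clique l_1..l_k,
  which uses every colour, can put pi(c) only on l_k; likewise r_k gets pi(c') if pigeon i'
  has colour pi(c'). Both at once contradict the edge l_k r_k (c = c') or the identification
  of l_k with r_k (c ~= c'). Hence sigma(i) = pi^-1(colour of i) chooses for every pigeon one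
  of its edges with no two pigeons choosing edges into the same hole, which is a 0/1 solution
  of the pigeonhole equations. Conversely such a choice colours G: pigeon i gets sigma(i), z_t
  gets t mod k, and the two cliques of a gadget can be completed because at most one of its
  two pigeons uses the shared hole. Each pigeon lies in at most d k^2 gadgets, which gives
  the size and degree bounds.
*)

theory Submission
  imports Defs "HOL-Combinatorics.Permutations"
begin

section \<open>Colourings of cliques and of overlapping windows\<close>

lemma inj_on_forced_value:
  assumes "finite B" "inj_on h A" "h ` A \<subseteq> B" "card A = card B"
    and "a \<in> A" "x \<in> B" "x \<notin> h ` (A - {a})"
  shows "h a = x"
proof -
  have "h ` A = B" using assms(1-4) by (metis card_image card_subset_eq)
  then obtain a' where "a' \<in> A" "h a' = x" using \<open>x \<in> B\<close> by blast
  with assms(7) show ?thesis by blast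
qed

lemma permutes_with_values:
  assumes "a \<in> S" "b \<in> S" "a \<noteq> b" "u \<in> S" "w \<in> S" "u \<noteq> w"
  obtains h where "h permutes S" "h a = u" "h b = w"
proof -
  let ?s = "Transposition.transpose a u"
  have "?s b \<noteq> u" "?s b \<in> S" using assms by (auto simp: Transposition.transpose_def)
  then show ?thesis
    using that[of "Transposition.transpose (?s b) w \<circ> ?s"] assms
    by (simp add: permutes_compose permutes_swap_id)
qed

(* A permutation of {1..k} takes the value c, and only h 1 or h k may:
   hence the hypothesis on x. *)
lemma clique_colouring_with_constraints:
  fixes k :: nat
  assumes "3 \<le> k" "p \<in> {1..k}" "c \<in> {1..k}" "x \<in> {1..k}" "x = c \<or> p \<noteq> c"
  obtains h where "h permutes {1..k}" "h 1 \<noteq> p" "h k = x" "\<forall>a\<in>{2..k-1}. h a \<noteq> c"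
proof (cases "x = c")
  case True
  have "\<not> {1..k} \<subseteq> {c, p}"
  proof
    assume "{1..k} \<subseteq> {c, p}"
    then have "card {1..k} \<le> card {c, p}" by (intro card_mono) auto
    also have "\<dots> \<le> 2" by (simp add: card_insert_le_m1)
    finally show False using assms(1) by simp
  qed
  then obtain u where u: "u \<in> {1..k}" "u \<noteq> c" "u \<noteq> p" by blast
  obtain h where h: "h permutes {1..k}" "h 1 = u" "h k = c"
    using permutes_with_values[of 1 "{1..k}" k u c] u assms(1,3) by auto
  have "h a \<noteq> c" if "a \<in> {2..k-1}" for a
  proof -
    have "a \<in> {1..k}" "a \<noteq> k" using that by auto
    then show ?thesis using h permutes_in_image permutes_inj by (metis inj_eq)
  qed
  with h u True that show ?thesis by blast
next
  case False
  obtain h where h: "h permutes {1..k}" "h 1 = c" "h k = x"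
    using permutes_with_values[of 1 "{1..k}" k c x] False assms(1,3,4) by auto
  have "h a \<noteq> c" if "a \<in> {2..k-1}" for a
  proof -
    have "a \<noteq> 1" using that by auto
    then show ?thesis using h permutes_inj by (metis inj_eq)
  qed
  with h False assms(5) that show ?thesis by blast
qed

lemma length_takeWhile_neq_less: "x \<in> set xs \<Longrightarrow> length (takeWhile (\<lambda>u. u \<noteq> x) xs) < length xs"
  by (induction xs) auto

lemma length_filter_takeWhile_neq_inj:
  assumes "distinct xs" "x \<in> set xs" "y \<in> set xs" "P x" "P y"
    and "length (filter P (takeWhile (\<lambda>u. u \<noteq> x) xs)) =
      length (filter P (takeWhile (\<lambda>u. u \<noteq> y) xs))"
  shows "x = y"
proof (rule ccontr)
  have earlier_fewer:
    "length (filter P (takeWhile (\<lambda>u. u \<noteq> a) zs)) < length (filter P (takeWhile (\<lambda>u. u \<noteq> b) zs))"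
    if "distinct zs" "zs = as @ a # bs" "b \<in> set bs" "P a" for zs as a bs b
  proof -
    have takeWhile_skip: "takeWhile (\<lambda>u. u \<noteq> v) (as @ ys) = as @ takeWhile (\<lambda>u. u \<noteq> v) ys"
      if "v \<notin> set as" for v ys
      using that by (induction as) auto
    have "a \<notin> set as" "b \<notin> set as" "a \<noteq> b" using that by auto
    then have "takeWhile (\<lambda>u. u \<noteq> a) zs = as"
      and "takeWhile (\<lambda>u. u \<noteq> b) zs = as @ a # takeWhile (\<lambda>u. u \<noteq> b) bs"
      using that(2) takeWhile_skip by simp_all
    with \<open>P a\<close> show ?thesis by simp
  qed
  assume "x \<noteq> y"
  obtain as bs where xs: "xs = as @ x # bs" using assms(2) split_list by metis
  show False
  proof (cases "y \<in> set bs")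
    case True
    then show False using earlier_fewer[OF assms(1) xs True assms(4)] assms(6) by simp
  next
    case False
    then obtain cs ds where "as = cs @ y # ds" using xs assms(3) \<open>x \<noteq> y\<close> split_list by fastforce
    then have "xs = cs @ y # (ds @ x # bs)" using xs by simp
    from earlier_fewer[OF assms(1) this _ assms(5), of x] show False using assms(6) by simp
  qed
qed

lemma residue_of_shift:
  fixes c k m :: nat
  assumes "c \<in> {1..k}"
  shows "(c + k * m - 1) mod k + 1 = c"
proof -
  obtain c0 where "c = Suc c0" "c0 < k" using assms by (cases c) auto
  then show ?thesis by simp
qed

lemma zidx_le:
  assumes "v \<in> set os" "pcol v \<le> k"
  shows "zidx k os v \<le> k * length os"
proof -
  let ?n = "length (filter (\<lambda>u. pcol u = pcol v) (takeWhile (\<lambda>u. u \<noteq> v) os))"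
  have "?n \<le> length (takeWhile (\<lambda>u. u \<noteq> v) os)" by (rule length_filter_le)
  also have "\<dots> < length os" using assms(1) by (rule length_takeWhile_neq_less)
  finally have "k * (?n + 1) \<le> k * length os" by (intro mult_le_mono2) simp
  with assms(2) show ?thesis unfolding zidx_def by simp
qed

(* zidx v determines pcol v as its residue mod k, and then the rank of v among the
   entries of os with the same pre-colour. *)
lemma zidx_inj_on:
  assumes "distinct os" "\<forall>v\<in>set os. pcol v \<in> {1..k}"
  shows "inj_on (zidx k os) (set os)"
proof (rule inj_onI)
  let ?rank = "\<lambda>v. length (filter (\<lambda>u. pcol u = pcol v) (takeWhile (\<lambda>u. u \<noteq> v) os))"
  fix x y assume x: "x \<in> set os" and y: "y \<in> set os" and eq: "zidx k os x = zidx k os y"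
  have pcol_zidx: "pcol v = (zidx k os v - 1) mod k + 1" if "v \<in> set os" for v
    unfolding zidx_def using residue_of_shift assms(2) that by metis
  have same_col: "pcol x = pcol y" using pcol_zidx[OF x] pcol_zidx[OF y] eq by simp
  have "k > 0" using assms(2) x by fastforce
  moreover have "k * ?rank x = k * ?rank y" using eq same_col unfolding zidx_def by simp
  ultimately have "?rank x = ?rank y" by simp
  with same_col show "x = y"
    by (intro length_filter_takeWhile_neq_inj[OF assms(1) x y, of "\<lambda>u. pcol u = pcol x"]) simp_all
qed

(* z (t + k) and z t both avoid the k - 1 colours of z (t + 1), ..., z (t + k - 1). *)
lemma window_colouring_periodic:
  fixes z :: "nat \<Rightarrow> nat"
  assumes colours: "\<And>t. t \<in> {1..M} \<Longrightarrow> z t \<in> {1..k}"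
    and windows: "\<And>t. 1 \<le> t \<Longrightarrow> t + k - 1 \<le> M \<Longrightarrow> inj_on z {t..t + k - 1}"
    and c: "c \<in> {1..k}"
  shows "c + k * m \<le> M \<Longrightarrow> z (c + k * m) = z c"
proof (induction m)
  case (Suc m)
  let ?t = "c + k * m"
  have t: "1 \<le> ?t" "?t + k \<le> M" using Suc.prems c by auto
  have "z ?t = z (?t + k)"
  proof (rule inj_on_forced_value[where A = "{?t..?t + k - 1}" and B = "{1..k}" and a = ?t])
    show "inj_on z {?t..?t + k - 1}" using t by (intro windows) auto
    show "z ` {?t..?t + k - 1} \<subseteq> {1..k}"
    proof
      fix y assume "y \<in> z ` {?t..?t + k - 1}"
      then obtain s where s: "s \<in> {?t..?t + k - 1}" "y = z s" by (rule imageE)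
      have "s \<in> {1..M}" using s(1) t by auto
      then show "y \<in> {1..k}" unfolding s(2) by (rule colours)
    qed
    show "z (?t + k) \<in> {1..k}" using t by (intro colours) auto
    have next_window: "inj_on z {?t + 1..?t + k}" using t windows[of "?t + 1"] by simp
    show "z (?t + k) \<notin> z ` ({?t..?t + k - 1} - {?t})"
    proof
      assume "z (?t + k) \<in> z ` ({?t..?t + k - 1} - {?t})"
      then obtain s where s: "s \<in> {?t..?t + k - 1} - {?t}" "z (?t + k) = z s" by (rule imageE)
      have "?t + k \<in> {?t + 1..?t + k}" "s \<in> {?t + 1..?t + k}" using s(1) c by auto
      with s(2) have "?t + k = s" by (rule inj_onD[OF next_window])
      with s(1) c show False by auto
    qed
    show "card {?t..?t + k - 1} = card {1..k}" "?t \<in> {?t..?t + k - 1}" using c by auto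
  qed simp
  then show ?case using Suc by (simp add: add.commute add.left_commute)
qed simp

lemma mod_neq_if_close:
  fixes x y k :: nat
  assumes "x < y" "y < x + k"
  shows "x mod k \<noteq> y mod k"
proof
  assume "x mod k = y mod k"
  then have "k dvd y - x" using assms(1) by (metis mod_eq_dvd_iff_nat less_imp_le_nat)
  moreover have "0 < y - x" "y - x < k" using assms by auto
  ultimately show False using nat_dvd_not_less by blast
qed

section \<open>The graph G(B)\<close>

locale php_graph =
  fixes k :: nat and I J :: "nat set" and N :: "nat \<Rightarrow> nat set" and e :: "nat \<Rightarrow> nat \<Rightarrow> nat"
    and os :: "vert list" and d :: nat
  assumes k_ge_3: "k \<ge> 3" and finite_I: "finite I"
    and N_subset_card: "\<forall>i \<in> I. N i \<subseteq> J \<and> card (N i) = k"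
    and hole_degree: "\<forall>j \<in> J. card {i \<in> I. j \<in> N i} \<le> d * k"
    and e_bij: "\<forall>i \<in> I. bij_betw (e i) {1..k} (N i)"
    and distinct_os: "distinct os" and set_os: "set os = precol I e k"
begin

abbreviation "gad \<equiv> gadgets I e k"
abbreviation "merge \<equiv> collapse k os"
abbreviation "V \<equiv> G_verts I e k os"
abbreviation "E \<equiv> G_edges I e k os"
abbreviation "M \<equiv> Mz I e k"

lemma gadgets_iff: "(i, c, i', c') \<in> gad \<longleftrightarrow> i \<in> I \<and> i' \<in> I \<and> i \<noteq> i' \<and>
    c \<in> {1..k} \<and> c' \<in> {1..k} \<and> e i c = e i' c'"
  unfolding gadgets_def by simp

lemma e_mem: "i \<in> I \<Longrightarrow> c \<in> {1..k} \<Longrightarrow> e i c \<in> N i"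
  using e_bij bij_betwE by blast

lemma e_inj: "i \<in> I \<Longrightarrow> c \<in> {1..k} \<Longrightarrow> c' \<in> {1..k} \<Longrightarrow> e i c = e i c' \<Longrightarrow> c = c'"
  using e_bij by (meson bij_betw_imp_inj_on inj_onD)

lemma e_surj: "i \<in> I \<Longrightarrow> j \<in> N i \<Longrightarrow> \<exists>c \<in> {1..k}. e i c = j"
  using e_bij by (metis bij_betw_imp_surj_on imageE)

lemma finite_N: "i \<in> I \<Longrightarrow> finite (N i)"
  using N_subset_card k_ge_3 by (metis card.infinite not_numeral_le_zero)

lemma finite_gadgets: "finite gad"
proof (rule finite_subset)
  show "gad \<subseteq> I \<times> {1..k} \<times> I \<times> {1..k}" unfolding gadgets_def by auto
qed (use finite_I in auto)

lemma finite_precol: "finite (precol I e k)"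
  unfolding precol_def using finite_gadgets by simp

lemma M_eq: "M = k * length os"
  unfolding Mz_def using distinct_os set_os distinct_card by metis

lemma pcol_precol: "x \<in> precol I e k \<Longrightarrow> pcol x \<in> {1..k}"
  unfolding precol_def gadgets_def by auto

lemma zidx_precol_le: "x \<in> precol I e k \<Longrightarrow> zidx k os x \<le> M"
  using zidx_le[of x os k] pcol_precol set_os M_eq by auto

lemma merge_precol: "x \<in> precol I e k \<Longrightarrow> merge x = Zv (zidx k os x)"
  unfolding precol_def by auto

lemma k_le_M: "gad \<noteq> {} \<Longrightarrow> k \<le> M"
  using finite_precol unfolding Mz_def precol_def by (simp add: Suc_le_eq card_gt_0_iff)

lemma merge_Rv: "a \<noteq> k \<Longrightarrow> merge (Rv g a) = Rv g a"
  by (cases g) auto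

lemma raw_edge_merge: "(x, y) \<in> raw_edges I e k \<Longrightarrow> (merge x, merge y) \<in> E"
  unfolding G_edges_def by force

lemma raw_vert_merge: "x \<in> raw_verts I e k \<Longrightarrow> merge x \<in> V"
  unfolding G_verts_def by blast

lemma raw_edge_left_clique: "g \<in> gad \<Longrightarrow> 1 \<le> a \<Longrightarrow> a < b \<Longrightarrow> b \<le> k \<Longrightarrow> (Lv g a, Lv g b) \<in> raw_edges I e k"
  unfolding raw_edges_def by (cases g) (auto simp: gadget_edges_def)

lemma raw_edge_right_clique: "g \<in> gad \<Longrightarrow> 1 \<le> a \<Longrightarrow> a < b \<Longrightarrow> b \<le> k \<Longrightarrow> (Rv g a, Rv g b) \<in> raw_edges I e k"
  unfolding raw_edges_def by (cases g) (auto simp: gadget_edges_def)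

lemma raw_edge_left_pigeon: "g = (i, c, i', c') \<Longrightarrow> g \<in> gad \<Longrightarrow> (Pig i, Lv g 1) \<in> raw_edges I e k"
  unfolding raw_edges_def by (auto simp: gadget_edges_def)

lemma raw_edge_right_pigeon: "g = (i, c, i', c') \<Longrightarrow> g \<in> gad \<Longrightarrow> (Pig i', Rv g 1) \<in> raw_edges I e k"
  unfolding raw_edges_def by (auto simp: gadget_edges_def)

lemma raw_edge_left_precol: "g \<in> gad \<Longrightarrow> 2 \<le> a \<Longrightarrow> a \<le> k - 1 \<Longrightarrow> (PLv g, Lv g a) \<in> raw_edges I e k"
  unfolding raw_edges_def by (cases g) (auto simp: gadget_edges_def)

lemma raw_edge_right_precol: "g \<in> gad \<Longrightarrow> 2 \<le> a \<Longrightarrow> a \<le> k - 1 \<Longrightarrow> (PRv g, Rv g a) \<in> raw_edges I e k"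
  unfolding raw_edges_def by (cases g) (auto simp: gadget_edges_def)

lemma raw_edge_ends: "g = (i, c, i', c) \<Longrightarrow> g \<in> gad \<Longrightarrow> (Lv g k, Rv g k) \<in> raw_edges I e k"
  unfolding raw_edges_def by (intro UnI1 UN_I[of g]) (auto simp: gadget_edges_def)

lemma raw_edge_window: "1 \<le> t \<Longrightarrow> t + k - 1 \<le> M \<Longrightarrow> t \<le> a \<Longrightarrow> a < b \<Longrightarrow> b \<le> t + k - 1 \<Longrightarrow>
    (Zv a, Zv b) \<in> raw_edges I e k"
  unfolding raw_edges_def z_edges_def by blast

lemma raw_vert_Pig: "i \<in> I \<Longrightarrow> Pig i \<in> raw_verts I e k"
  and raw_vert_Lv: "g \<in> gad \<Longrightarrow> a \<in> {1..k} \<Longrightarrow> Lv g a \<in> raw_verts I e k"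
  and raw_vert_Rv: "g \<in> gad \<Longrightarrow> a \<in> {1..k} \<Longrightarrow> Rv g a \<in> raw_verts I e k"
  and raw_vert_precol: "x \<in> precol I e k \<Longrightarrow> x \<in> raw_verts I e k"
  and raw_vert_Zv: "t \<in> {1..M} \<Longrightarrow> Zv t \<in> raw_verts I e k"
  unfolding raw_verts_def by blast+

lemma gadget_edge_cases:
  assumes "g = (i, c, i', c')" and "(x, y) \<in> gadget_edges k g"
  obtains (left_clique) a b where "x = Lv g a" "y = Lv g b" "1 \<le> a" "a < b" "b \<le> k"
    | (right_clique) a b where "x = Rv g a" "y = Rv g b" "1 \<le> a" "a < b" "b \<le> k"
    | (left_pigeon) "x = Pig i" "y = Lv g 1"
    | (left_precol) a where "x = PLv g" "y = Lv g a" "2 \<le> a" "a \<le> k - 1"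
    | (right_pigeon) "x = Pig i'" "y = Rv g 1"
    | (right_precol) a where "x = PRv g" "y = Rv g a" "2 \<le> a" "a \<le> k - 1"
    | (ends) "c = c'" "x = Lv g k" "y = Rv g k"
  using assms unfolding gadget_edges_def by (auto split: if_splits)

lemma raw_edge_cases:
  assumes "(x, y) \<in> raw_edges I e k"
  obtains (gadget) g where "g \<in> gad" "(x, y) \<in> gadget_edges k g"
    | (window) a b t where "x = Zv a" "y = Zv b" "1 \<le> t" "t + k - 1 \<le> M"
        "t \<le> a" "a < b" "b \<le> t + k - 1"
  using assms unfolding raw_edges_def z_edges_def by blast

lemma raw_vert_cases:
  assumes "x \<in> raw_verts I e k"
  obtains (pigeon) i where "x = Pig i" "i \<in> I"
    | (left) g a where "x = Lv g a" "g \<in> gad" "a \<in> {1..k}"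
    | (right) g a where "x = Rv g a" "g \<in> gad" "a \<in> {1..k}"
    | (precol) "x \<in> precol I e k"
    | (window) t where "x = Zv t"
  using assms unfolding raw_verts_def by blast

(* \<sigma> i selects the edge e i (\<sigma> i) of pigeon i; a gadget (i, \<sigma> i, i', \<sigma> i') would mean
   that two pigeons are sent to the same hole. *)
definition conflict_free :: "(nat \<Rightarrow> nat) \<Rightarrow> bool" where
  "conflict_free \<sigma> \<longleftrightarrow> (\<forall>i \<in> I. \<sigma> i \<in> {1..k}) \<and> (\<forall>i i'. (i, \<sigma> i, i', \<sigma> i') \<notin> gad)"

lemma php_sat_iff_conflict_free: "php_sat I N \<longleftrightarrow> (\<exists>\<sigma>. conflict_free \<sigma>)"
proof
  assume "php_sat I N"
  then obtain p :: "nat \<Rightarrow> nat \<Rightarrow> int" where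
    p01: "\<forall>i \<in> I. \<forall>j \<in> N i. p i j \<in> {0, 1}" and
    psum: "\<forall>i \<in> I. (\<Sum>j \<in> N i. p i j) = 1" and
    pconf: "\<forall>i \<in> I. \<forall>i' \<in> I. \<forall>j \<in> N i \<inter> N i'. i \<noteq> i' \<longrightarrow> p i j * p i' j = 0"
    unfolding php_sat_def by blast
  have "\<exists>c \<in> {1..k}. p i (e i c) = 1" if i: "i \<in> I" for i
  proof -
    have "\<exists>j \<in> N i. p i j \<noteq> 0" using psum i by (metis sum.neutral zero_neq_one)
    then show ?thesis using p01 i e_surj by fastforce
  qed
  then obtain \<sigma> where \<sigma>: "\<forall>i \<in> I. \<sigma> i \<in> {1..k} \<and> p i (e i (\<sigma> i)) = 1" by metis
  have "(i, \<sigma> i, i', \<sigma> i') \<notin> gad" for i i'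
  proof
    assume g: "(i, \<sigma> i, i', \<sigma> i') \<in> gad"
    then have g': "i \<in> I" "i' \<in> I" "i \<noteq> i'" "\<sigma> i \<in> {1..k}" "\<sigma> i' \<in> {1..k}"
      "e i (\<sigma> i) = e i' (\<sigma> i')"
      by (simp_all add: gadgets_iff)
    then have "e i (\<sigma> i) \<in> N i \<inter> N i'" using e_mem[OF g'(1,4)] e_mem[OF g'(2,5)] by simp
    then have "p i (e i (\<sigma> i)) * p i' (e i' (\<sigma> i')) = 0" using pconf g' by metis
    moreover have "p i (e i (\<sigma> i)) = 1" "p i' (e i' (\<sigma> i')) = 1" using g'(1,2) \<sigma> by simp_all
    ultimately show False using g'(6) by simp
  qed
  with \<sigma> show "\<exists>\<sigma>. conflict_free \<sigma>" unfolding conflict_free_def by blast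
next
  assume "\<exists>\<sigma>. conflict_free \<sigma>"
  then obtain \<sigma> where \<sigma>: "conflict_free \<sigma>" ..
  define p :: "nat \<Rightarrow> nat \<Rightarrow> int" where "p i j = (if j = e i (\<sigma> i) then 1 else 0)" for i j
  have "(\<Sum>j \<in> N i. p i j) = 1" if "i \<in> I" for i
    using that \<sigma> e_mem finite_N unfolding p_def conflict_free_def by simp
  moreover have "p i j * p i' j = 0" if "i \<in> I" "i' \<in> I" "j \<in> N i \<inter> N i'" "i \<noteq> i'" for i i' j
    using that \<sigma> unfolding p_def conflict_free_def by (auto simp: gadgets_iff)
  ultimately show "php_sat I N"
    unfolding php_sat_def by (intro exI[of _ p]) (auto simp: p_def)
qed

end

section \<open>Colourings yield solutions of the pigeonhole equations\<close>

locale php_colouring = php_graph +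
  fixes f :: "vert \<Rightarrow> nat"
  assumes colour_range: "\<forall>v \<in> V. f v \<in> {1..k}" and colour_proper: "\<forall>(u, v) \<in> E. f u \<noteq> f v"
begin

lemma raw_edge_colours_differ: "(x, y) \<in> raw_edges I e k \<Longrightarrow> f (merge x) \<noteq> f (merge y)"
  using colour_proper raw_edge_merge by fast

lemma raw_vert_colour: "x \<in> raw_verts I e k \<Longrightarrow> f (merge x) \<in> {1..k}"
  using colour_range raw_vert_merge by blast

lemma window_inj: "1 \<le> t \<Longrightarrow> t + k - 1 \<le> M \<Longrightarrow> inj_on (\<lambda>s. f (Zv s)) {t..t + k - 1}"
proof (rule inj_onI, rule ccontr)
  fix a b assume t: "1 \<le> t" "t + k - 1 \<le> M" and ab: "a \<in> {t..t + k - 1}" "b \<in> {t..t + k - 1}"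
    and same: "f (Zv a) = f (Zv b)" and "a \<noteq> b"
  then consider "a < b" | "b < a" by linarith
  then show False
  proof cases
    case 1
    then show False using raw_edge_colours_differ[OF raw_edge_window[OF t _ 1]] ab same by simp
  next
    case 2
    then show False using raw_edge_colours_differ[OF raw_edge_window[OF t _ 2]] ab same by simp
  qed
qed

lemma window_colour_periodic: "c \<in> {1..k} \<Longrightarrow> c + k * m \<le> M \<Longrightarrow> f (Zv (c + k * m)) = f (Zv c)"
proof (rule window_colouring_periodic[where z = "\<lambda>t. f (Zv t)"])
  show "f (Zv t) \<in> {1..k}" if "t \<in> {1..M}" for t
    using raw_vert_colour[OF raw_vert_Zv[OF that]] by simp
qed (rule window_inj)

lemma precol_colour: "x \<in> precol I e k \<Longrightarrow> f (merge x) = f (Zv (pcol x))"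
  using window_colour_periodic[OF pcol_precol] zidx_precol_le merge_precol
  unfolding zidx_def by metis

lemma first_window_bij: "gad \<noteq> {} \<Longrightarrow> bij_betw (\<lambda>c. f (Zv c)) {1..k} {1..k}"
proof -
  assume "gad \<noteq> {}"
  then have inj: "inj_on (\<lambda>c. f (Zv c)) {1..k}" using window_inj[of 1] k_le_M by simp
  have "(\<lambda>c. f (Zv c)) ` {1..k} \<subseteq> {1..k}"
    using raw_vert_colour[OF raw_vert_Zv] k_le_M \<open>gad \<noteq> {}\<close> by fastforce
  with inj show ?thesis unfolding bij_betw_def by (simp add: endo_inj_surj)
qed

(* The clique X 1, ..., X k uses all k colours, and the colour of Q is avoided by all
   of its vertices except X k. *)
lemma clique_end_colour:
  assumes clique: "\<And>a b. 1 \<le> a \<Longrightarrow> a < b \<Longrightarrow> b \<le> k \<Longrightarrow> (X a, X b) \<in> raw_edges I e k"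
    and verts: "\<And>a. a \<in> {1..k} \<Longrightarrow> X a \<in> raw_verts I e k"
    and first: "(P, X 1) \<in> raw_edges I e k"
    and middle: "\<And>a. 2 \<le> a \<Longrightarrow> a \<le> k - 1 \<Longrightarrow> (Q, X a) \<in> raw_edges I e k"
    and same: "f (merge P) = f (merge Q)" and Q: "Q \<in> raw_verts I e k"
  shows "f (merge (X k)) = f (merge Q)"
proof (rule inj_on_forced_value[where h = "\<lambda>a. f (merge (X a))" and a = k])
  show "inj_on (\<lambda>a. f (merge (X a))) {1..k}"
  proof (rule inj_onI, rule ccontr)
    fix a b assume ab: "a \<in> {1..k}" "b \<in> {1..k}" "f (merge (X a)) = f (merge (X b))" "a \<noteq> b"
    then show False
      using raw_edge_colours_differ[OF clique] by (metis atLeastAtMost_iff linorder_neqE_nat)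
  qed
  show "(\<lambda>a. f (merge (X a))) ` {1..k} \<subseteq> {1..k}" using raw_vert_colour[OF verts] by blast
  show "f (merge Q) \<notin> (\<lambda>a. f (merge (X a))) ` ({1..k} - {k})"
  proof
    assume "f (merge Q) \<in> (\<lambda>a. f (merge (X a))) ` ({1..k} - {k})"
    then obtain a where a: "a \<in> {1..k} - {k}" "f (merge Q) = f (merge (X a))" by (rule imageE)
    show False
    proof (cases "a = 1")
      case True
      then show False using raw_edge_colours_differ[OF first] a same by simp
    next
      case False
      then have "2 \<le> a" "a \<le> k - 1" using a(1) by auto
      then show False using raw_edge_colours_differ[OF middle] a(2) by metis
    qed
  qed
qed (use raw_vert_colour[OF Q] k_ge_3 in auto)

lemma left_end_colour:
  assumes g: "g = (i, c, i', c')" "g \<in> gad" and pigeon: "f (Pig i) = f (Zv c)"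
  shows "f (Lv g k) = f (Zv c)"
proof -
  have precol: "PLv g \<in> precol I e k" using g unfolding precol_def by blast
  then have "f (merge (PLv g)) = f (Zv c)" using precol_colour[OF precol] g by simp
  with clique_end_colour[where X = "Lv g" and P = "Pig i" and Q = "PLv g"] show ?thesis
    using g pigeon raw_edge_left_clique raw_vert_Lv raw_edge_left_pigeon raw_edge_left_precol
      raw_vert_precol[OF precol] by simp
qed

lemma right_end_colour:
  assumes g: "g = (i, c, i', c')" "g \<in> gad" and pigeon: "f (Pig i') = f (Zv c')"
  shows "f (merge (Rv g k)) = f (Zv c')"
proof -
  have precol: "PRv g \<in> precol I e k" using g unfolding precol_def by blast
  then have "f (merge (PRv g)) = f (Zv c')" using precol_colour[OF precol] g by simp
  moreover have "merge (Rv g 1) = Rv g 1" "merge (Pig i') = Pig i'" using k_ge_3 merge_Rv by auto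
  ultimately show ?thesis
    using clique_end_colour[where X = "Rv g" and P = "Pig i'" and Q = "PRv g"]
      g pigeon raw_edge_right_clique raw_vert_Rv raw_edge_right_pigeon raw_edge_right_precol
      raw_vert_precol[OF precol] by simp
qed

lemma no_conflicting_gadget:
  assumes g: "(i, c, i', c') \<in> gad" and "f (Pig i) = f (Zv c)" "f (Pig i') = f (Zv c')"
  shows False
proof -
  let ?g = "(i, c, i', c')"
  have L: "f (Lv ?g k) = f (Zv c)" and R: "f (merge (Rv ?g k)) = f (Zv c')"
    using left_end_colour right_end_colour g assms(2,3) by blast+
  show False
  proof (cases "c = c'")
    case True
    then show False using raw_edge_colours_differ[OF raw_edge_ends[OF _ g]] L R by simp
  next
    case False
    have "c \<in> {1..k}" "c' \<in> {1..k}" using g by (simp_all add: gadgets_iff)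
    then have "f (Zv c) \<noteq> f (Zv c')"
      using False first_window_bij g by (metis bij_betw_imp_inj_on empty_iff inj_on_contraD)
    then show False using L R False by simp
  qed
qed

lemma conflict_free_choice: "\<exists>\<sigma>. conflict_free \<sigma>"
proof (cases "gad = {}")
  case True
  then have "conflict_free (\<lambda>_. 1)" using k_ge_3 unfolding conflict_free_def by auto
  then show ?thesis by blast
next
  case False
  let ?z = "\<lambda>c. f (Zv c)"
  define \<sigma> where "\<sigma> i = inv_into {1..k} ?z (f (Pig i))" for i
  have \<sigma>: "\<sigma> i \<in> {1..k}" "f (Zv (\<sigma> i)) = f (Pig i)" if "i \<in> I" for i
  proof -
    have "f (Pig i) \<in> ?z ` {1..k}"
      using raw_vert_colour[OF raw_vert_Pig[OF that]] first_window_bij[OF False]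
      by (simp add: bij_betw_def)
    then show "\<sigma> i \<in> {1..k}" "f (Zv (\<sigma> i)) = f (Pig i)"
      unfolding \<sigma>_def by (rule inv_into_into, rule f_inv_into_f)
  qed
  have "(i, \<sigma> i, i', \<sigma> i') \<notin> gad" for i i'
  proof
    assume g: "(i, \<sigma> i, i', \<sigma> i') \<in> gad"
    then have "i \<in> I" "i' \<in> I" by (simp_all add: gadgets_iff)
    with g \<sigma> show False using no_conflicting_gadget by metis
  qed
  with \<sigma> have "conflict_free \<sigma>" unfolding conflict_free_def by blast
  then show ?thesis by blast
qed

end

lemma (in php_graph) conflict_free_if_colourable:
  assumes "k_colourable k V E" shows "\<exists>\<sigma>. conflict_free \<sigma>"
proof -
  obtain f where "\<forall>v \<in> V. f v \<in> {1..k}" "\<forall>(u, v) \<in> E. f u \<noteq> f v"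
    using assms unfolding k_colourable_def by blast
  then interpret php_colouring k I J N e os d f by unfold_locales
  show ?thesis by (rule conflict_free_choice)
qed

section \<open>Solutions of the pigeonhole equations yield colourings\<close>

context php_graph
begin

definition gadget_colouring :: "(nat \<Rightarrow> nat) \<Rightarrow> gidx \<Rightarrow> (nat \<Rightarrow> nat) \<Rightarrow> (nat \<Rightarrow> nat) \<Rightarrow> bool" where
  "gadget_colouring \<sigma> g hl hr \<longleftrightarrow> (case g of (i, c, i', c') \<Rightarrow>
     hl permutes {1..k} \<and> hr permutes {1..k} \<and> hl 1 \<noteq> \<sigma> i \<and> hr 1 \<noteq> \<sigma> i'
     \<and> (\<forall>a \<in> {2..k - 1}. hl a \<noteq> c \<and> hr a \<noteq> c')
     \<and> (if c = c' then hl k \<noteq> hr k else hl k = hr k))"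

lemma gadget_end_colours:
  assumes \<sigma>: "conflict_free \<sigma>" and g: "(i, c, i', c') \<in> gad"
  obtains x y where "x \<in> {1..k}" "y \<in> {1..k}" "x = c \<or> \<sigma> i \<noteq> c" "y = c' \<or> \<sigma> i' \<noteq> c'"
    "if c = c' then x \<noteq> y else x = y"
proof -
  have in_range: "c \<in> {1..k}" "c' \<in> {1..k}" using g by (simp_all add: gadgets_iff)
  have not_both: "\<not> (\<sigma> i = c \<and> \<sigma> i' = c')" using \<sigma> g unfolding conflict_free_def by metis
  show ?thesis
  proof (cases "c = c'")
    case True
    define u :: nat where "u = (if c = 1 then 2 else 1)"
    have u: "u \<in> {1..k}" "u \<noteq> c" using k_ge_3 unfolding u_def by auto
    show ?thesis
    proof (cases "\<sigma> i' = c")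
      case True
      then show ?thesis using that[of u c] \<open>c = c'\<close> u in_range not_both by auto
    next
      case False
      then show ?thesis using that[of c u] \<open>c = c'\<close> u in_range by auto
    qed
  next
    case different: False
    show ?thesis
    proof (cases "\<sigma> i = c")
      case True
      then show ?thesis using that[of c c] different in_range not_both by auto
    next
      case False
      then show ?thesis using that[of c' c'] different in_range by auto
    qed
  qed
qed

lemma gadget_colouring_exists:
  assumes \<sigma>: "conflict_free \<sigma>" and g: "g = (i, c, i', c')" "g \<in> gad"
  shows "\<exists>hl hr. gadget_colouring \<sigma> g hl hr"
proof -
  have in_range: "\<sigma> i \<in> {1..k}" "c \<in> {1..k}" "\<sigma> i' \<in> {1..k}" "c' \<in> {1..k}"
    using \<sigma> g unfolding conflict_free_def by (auto simp: gadgets_iff)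
  obtain x y where xy: "x \<in> {1..k}" "y \<in> {1..k}" "x = c \<or> \<sigma> i \<noteq> c" "y = c' \<or> \<sigma> i' \<noteq> c'"
    "if c = c' then x \<noteq> y else x = y"
    using gadget_end_colours[OF \<sigma>] g by metis
  obtain hl where "hl permutes {1..k}" "hl 1 \<noteq> \<sigma> i" "hl k = x" "\<forall>a \<in> {2..k - 1}. hl a \<noteq> c"
    using clique_colouring_with_constraints[OF k_ge_3 in_range(1,2) xy(1,3)] by blast
  moreover obtain hr where
    "hr permutes {1..k}" "hr 1 \<noteq> \<sigma> i'" "hr k = y" "\<forall>a \<in> {2..k - 1}. hr a \<noteq> c'"
    using clique_colouring_with_constraints[OF k_ge_3 in_range(3,4) xy(2,4)] by blast
  ultimately have "gadget_colouring \<sigma> g hl hr"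
    unfolding gadget_colouring_def g(1) using xy(5) by auto
  then show ?thesis by blast
qed

(* PLv and PRv vertices do not occur in G: they are merged into z-vertices. *)
definition assembled_colouring ::
    "(nat \<Rightarrow> nat) \<Rightarrow> (gidx \<Rightarrow> nat \<Rightarrow> nat) \<Rightarrow> (gidx \<Rightarrow> nat \<Rightarrow> nat) \<Rightarrow> vert \<Rightarrow> nat" where
  "assembled_colouring \<sigma> L R v = (case v of
      Pig i \<Rightarrow> \<sigma> i | Lv g a \<Rightarrow> L g a | Rv g a \<Rightarrow> R g a | Zv t \<Rightarrow> (t - 1) mod k + 1 | _ \<Rightarrow> 1)"

context
  fixes \<sigma> :: "nat \<Rightarrow> nat" and L R :: "gidx \<Rightarrow> nat \<Rightarrow> nat"
  assumes \<sigma>: "conflict_free \<sigma>" and LR: "\<forall>g \<in> gad. gadget_colouring \<sigma> g (L g) (R g)"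
begin

lemma assembled_colouring_precol:
  assumes "x \<in> precol I e k" shows "assembled_colouring \<sigma> L R (merge x) = pcol x"
  using residue_of_shift[OF pcol_precol[OF assms]] merge_precol[OF assms]
  unfolding assembled_colouring_def zidx_def by simp

lemma assembled_colouring_Rv:
  assumes "g \<in> gad" shows "assembled_colouring \<sigma> L R (merge (Rv g a)) = R g a"
proof -
  obtain i c i' c' where g: "g = (i, c, i', c')" by (cases g)
  have "c \<noteq> c' \<Longrightarrow> L g k = R g k" using LR assms unfolding gadget_colouring_def g by auto
  then show ?thesis unfolding assembled_colouring_def g by auto
qed

lemma assembled_colouring_range:
  assumes "x \<in> raw_verts I e k" shows "assembled_colouring \<sigma> L R (merge x) \<in> {1..k}"
  using assms
proof (cases rule: raw_vert_cases)
  case (pigeon i)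
  then show ?thesis using \<sigma> unfolding conflict_free_def assembled_colouring_def by simp
next
  case (left g a)
  then have "L g permutes {1..k}"
    using LR unfolding gadget_colouring_def by (auto split: prod.splits)
  then have "L g a \<in> {1..k}" using left(3) by (simp only: permutes_in_image)
  then show ?thesis using left(1) unfolding assembled_colouring_def by simp
next
  case (right g a)
  then have "R g permutes {1..k}"
    using LR unfolding gadget_colouring_def by (auto split: prod.splits)
  then have "R g a \<in> {1..k}" using right(3) by (simp only: permutes_in_image)
  then show ?thesis using right(1) assembled_colouring_Rv[OF right(2)] by simp
next
  case precol
  then show ?thesis using assembled_colouring_precol pcol_precol by simp
next
  case (window t)
  have "(t - 1) mod k < k" using k_ge_3 by simp
  then show ?thesis using window unfolding assembled_colouring_def by simp
qed

lemma assembled_colouring_proper: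
  assumes "(x, y) \<in> raw_edges I e k"
  shows "assembled_colouring \<sigma> L R (merge x) \<noteq> assembled_colouring \<sigma> L R (merge y)"
  using assms
proof (cases rule: raw_edge_cases)
  case (window a b t)
  then have "(a - 1) mod k \<noteq> (b - 1) mod k" by (intro mod_neq_if_close) auto
  then show ?thesis using window unfolding assembled_colouring_def by simp
next
  case (gadget g)
  let ?f = "assembled_colouring \<sigma> L R"
  obtain i c i' c' where g: "g = (i, c, i', c')" by (cases g)
  have hs: "L g permutes {1..k}" "R g permutes {1..k}" "L g 1 \<noteq> \<sigma> i" "R g 1 \<noteq> \<sigma> i'"
    "\<forall>a \<in> {2..k - 1}. L g a \<noteq> c \<and> R g a \<noteq> c'" "c = c' \<Longrightarrow> L g k \<noteq> R g k"
    using LR gadget(1) unfolding gadget_colouring_def g by auto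
  have Lv: "?f (merge (Lv g a)) = L g a" for a unfolding assembled_colouring_def by simp
  have Rv: "?f (merge (Rv g a)) = R g a" for a using assembled_colouring_Rv[OF gadget(1)] .
  have precols: "PLv g \<in> precol I e k" "PRv g \<in> precol I e k"
    using gadget(1) unfolding precol_def by blast+
  from g gadget(2) show ?thesis
  proof (cases rule: gadget_edge_cases)
    case (left_clique a b)
    then show ?thesis using Lv permutes_inj[OF hs(1)] by (simp add: inj_eq)
  next
    case (right_clique a b)
    then show ?thesis using Rv permutes_inj[OF hs(2)] by (simp add: inj_eq)
  next
    case left_pigeon
    then show ?thesis using Lv hs(3) unfolding assembled_colouring_def by simp
  next
    case (left_precol a)
    then have "L g a \<noteq> c" using hs(5) by simp
    with left_precol show ?thesis using Lv assembled_colouring_precol[OF precols(1)] g by simp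
  next
    case right_pigeon
    then show ?thesis using Rv hs(4) unfolding assembled_colouring_def by simp
  next
    case (right_precol a)
    then have "R g a \<noteq> c'" using hs(5) by simp
    with right_precol show ?thesis using Rv assembled_colouring_precol[OF precols(2)] g by simp
  next
    case ends
    then show ?thesis using Lv Rv hs(6) by simp
  qed
qed

end

lemma colourable_if_conflict_free:
  assumes \<sigma>: "conflict_free \<sigma>" shows "k_colourable k V E"
proof -
  have "\<forall>g \<in> gad. \<exists>h. gadget_colouring \<sigma> g (fst h) (snd h)"
    using gadget_colouring_exists[OF \<sigma>] by (metis prod_cases4 fst_conv snd_conv)
  from bchoice[OF this] obtain H
    where H: "\<forall>g \<in> gad. gadget_colouring \<sigma> g (fst (H g)) (snd (H g))" ..
  let ?f = "assembled_colouring \<sigma> (\<lambda>g. fst (H g)) (\<lambda>g. snd (H g))"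
  have "\<forall>v \<in> V. ?f v \<in> {1..k}"
    unfolding G_verts_def using assembled_colouring_range[OF \<sigma> H] by blast
  moreover have "\<forall>(u, v) \<in> E. ?f u \<noteq> ?f v"
  proof (unfold G_edges_def, rule ballI)
    fix uv assume "uv \<in> (\<lambda>(u, v). (merge u, merge v)) ` raw_edges I e k"
    then obtain x y where "(x, y) \<in> raw_edges I e k" "uv = (merge x, merge y)" by auto
    then show "case uv of (u, v) \<Rightarrow> ?f u \<noteq> ?f v" using assembled_colouring_proper[OF \<sigma> H] by simp
  qed
  ultimately show ?thesis unfolding k_colourable_def by blast
qed

end

section \<open>Size and degree\<close>

context php_graph
begin

(* A gadget (i, c, i', c') is determined by c and i', since e i' is injective. *)
lemma card_gadgets_from: "card {g \<in> gad. fst g = i} \<le> d * k * k"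
proof (cases "i \<in> I")
  case False
  then have "{g \<in> gad. fst g = i} = {}" unfolding gadgets_def by auto
  then show ?thesis by (metis card.empty le0)
next
  case i: True
  let ?S = "SIGMA c:{1..k}. {i' \<in> I. e i c \<in> N i'}"
  let ?\<phi> = "\<lambda>g :: gidx. (fst (snd g), fst (snd (snd g)))"
  have "inj_on ?\<phi> {g \<in> gad. fst g = i}"
  proof (rule inj_onI)
    fix g h assume g: "g \<in> {g \<in> gad. fst g = i}" and h: "h \<in> {g \<in> gad. fst g = i}"
      and same: "?\<phi> g = ?\<phi> h"
    obtain c i' c1 where g_eq: "g = (i, c, i', c1)" using g by (cases g) auto
    obtain c2 where h_eq: "h = (i, c, i', c2)" using h same g_eq by (cases h) auto
    have "i' \<in> I" "c1 \<in> {1..k}" "c2 \<in> {1..k}" "e i' c1 = e i' c2"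
      using g h unfolding g_eq h_eq by (auto simp: gadgets_iff)
    with e_inj have "c1 = c2" by blast
    then show "g = h" unfolding g_eq h_eq by simp
  qed
  then have "card {g \<in> gad. fst g = i} = card (?\<phi> ` {g \<in> gad. fst g = i})"
    by (simp add: card_image)
  also have "\<dots> \<le> card ?S"
  proof (rule card_mono)
    show "finite ?S" using finite_I by auto
    show "?\<phi> ` {g \<in> gad. fst g = i} \<subseteq> ?S"
    proof
      fix p assume "p \<in> ?\<phi> ` {g \<in> gad. fst g = i}"
      then obtain g where g: "g \<in> gad" "fst g = i" "p = ?\<phi> g" by blast
      then obtain c i' c' where g_eq: "g = (i, c, i', c')" by (cases g) auto
      then have "i' \<in> I" "c \<in> {1..k}" "e i c \<in> N i'"
        using g(1) e_mem by (auto simp: gadgets_iff)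
      then show "p \<in> ?S" using g(3) g_eq by simp
    qed
  qed
  also have "card ?S = (\<Sum>c \<in> {1..k}. card {i' \<in> I. e i c \<in> N i'})"
    using finite_I by (simp add: card_SigmaI)
  also have "\<dots> \<le> (\<Sum>c \<in> {1..k}. d * k)"
  proof (rule sum_mono)
    fix c assume "c \<in> {1..k}"
    then have "e i c \<in> J" using e_mem i N_subset_card by blast
    then show "card {i' \<in> I. e i c \<in> N i'} \<le> d * k" using hole_degree by blast
  qed
  finally show ?thesis by (simp add: ac_simps)
qed

(* Gadgets come in pairs (i, c, i', c') and (i', c', i, c). *)
lemma card_gadgets_to: "card {g \<in> gad. fst (snd (snd g)) = i} \<le> d * k * k"
proof -
  let ?flip = "\<lambda>(i, c, i', c'). (i', c', i, c) :: gidx"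
  have "{g \<in> gad. fst (snd (snd g)) = i} \<subseteq> ?flip ` {g \<in> gad. fst g = i}"
  proof
    fix g assume g: "g \<in> {g \<in> gad. fst (snd (snd g)) = i}"
    then obtain a c c' where g_eq: "g = (a, c, i, c')" by (cases g) auto
    with g have "(i, c', a, c) \<in> {g \<in> gad. fst g = i}" by (auto simp: gadgets_iff)
    then show "g \<in> ?flip ` {g \<in> gad. fst g = i}" unfolding g_eq by force
  qed
  then have "card {g \<in> gad. fst (snd (snd g)) = i} \<le> card (?flip ` {g \<in> gad. fst g = i})"
    by (rule card_mono[rotated]) (use finite_gadgets in simp)
  also have "\<dots> \<le> card {g \<in> gad. fst g = i}" by (rule card_image_le) (use finite_gadgets in simp)
  also have "\<dots> \<le> d * k * k" by (rule card_gadgets_from)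
  finally show ?thesis .
qed

lemma card_gadgets: "card gad \<le> d * k * k * card I"
proof -
  have "card gad = card (\<Union>i \<in> I. {g \<in> gad. fst g = i})"
    by (rule arg_cong[where f = card]) (auto simp: gadgets_def)
  also have "\<dots> \<le> (\<Sum>i \<in> I. card {g \<in> gad. fst g = i})" by (rule card_UN_le[OF finite_I])
  also have "\<dots> \<le> (\<Sum>i \<in> I. d * k * k)" by (rule sum_mono) (rule card_gadgets_from)
  also have "\<dots> = d * k * k * card I" by simp
  finally show ?thesis .
qed

lemma card_precol: "card (precol I e k) \<le> 2 * card gad"
proof -
  have "card (precol I e k) \<le> card (PLv ` gad) + card (PRv ` gad)"
    unfolding precol_def by (rule card_Un_le)
  also have "\<dots> \<le> card gad + card gad" by (intro add_mono card_image_le finite_gadgets)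
  finally show ?thesis by simp
qed

lemma card_G_verts: "card V \<le> (6 * d + 6) * k ^ 4 * card I"
proof -
  let ?L = "(\<lambda>(g, a). Lv g a) ` (gad \<times> {1..k})" and ?R = "(\<lambda>(g, a). Rv g a) ` (gad \<times> {1..k})"
  have raw: "raw_verts I e k = Pig ` I \<union> ?L \<union> ?R \<union> precol I e k \<union> Zv ` {1..M}"
    unfolding raw_verts_def by auto
  have "card ?L \<le> card gad * k" "card ?R \<le> card gad * k"
    using card_image_le[of "gad \<times> {1..k}"] finite_gadgets by (simp_all add: card_cartesian_product)
  moreover have "card (Pig ` I) \<le> card I" "card (Zv ` {1..M}) \<le> M"
    using card_image_le[OF finite_I] card_image_le[of "{1..M}" Zv] by simp_all
  moreover have "M \<le> 2 * k * card gad" using card_precol unfolding Mz_def by simp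
  moreover have "card (raw_verts I e k) \<le>
      card (Pig ` I) + card ?L + card ?R + card (precol I e k) + card (Zv ` {1..M})"
    unfolding raw by (meson card_Un_le add_right_mono le_trans)
  ultimately have "card (raw_verts I e k) \<le> card I + (4 * k + 2) * card gad"
    using card_precol by (simp add: algebra_simps)
  also have "\<dots> \<le> card I + 6 * k * (d * k * k * card I)"
    using card_gadgets k_ge_3 by (intro add_mono mult_le_mono) simp_all
  also have "\<dots> \<le> (6 * d + 6) * k ^ 4 * card I"
  proof -
    have "1 \<le> k ^ 4" "k ^ 3 \<le> k ^ 4" using k_ge_3 by (simp_all add: power_increasing)
    then have "card I + 6 * d * k ^ 3 * card I \<le> k ^ 4 * card I + 6 * d * k ^ 4 * card I"
      by (intro add_mono) (simp_all add: mult_le_mono)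
    then show ?thesis by (simp add: power3_eq_cube power4_eq_xxxx algebra_simps)
  qed
  finally have "card (raw_verts I e k) \<le> (6 * d + 6) * k ^ 4 * card I" .
  moreover have "card V \<le> card (raw_verts I e k)"
    unfolding G_verts_def
    by (rule card_image_le) (simp add: raw finite_I finite_gadgets finite_precol)
  ultimately show ?thesis by linarith
qed


definition gadget_verts :: "gidx \<Rightarrow> vert set" where
  "gadget_verts g = Lv g ` {1..k} \<union> Rv g ` {1..k} \<union>
     {Pig (fst g), Pig (fst (snd (snd g))), Zv (zidx k os (PLv g)), Zv (zidx k os (PRv g))}"

definition nbhd_superset :: "vert \<Rightarrow> vert set" where
  "nbhd_superset v = (case v of
      Pig i \<Rightarrow> (\<lambda>g. Lv g 1) ` {g \<in> gad. fst g = i} \<union> (\<lambda>g. Rv g 1) ` {g \<in> gad. fst (snd (snd g)) = i}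
    | Lv g a \<Rightarrow> gadget_verts g
    | Rv g a \<Rightarrow> gadget_verts g
    | Zv t \<Rightarrow> Zv ` {t - k..t + k} \<union>
        (\<Union>x \<in> {x \<in> precol I e k. zidx k os x = t}. gadget_verts (case x of PLv g \<Rightarrow> g | PRv g \<Rightarrow> g))
    | _ \<Rightarrow> {})"

lemma merge_Rv_cases: "merge (Rv g a) \<in> {Rv g a, Lv g k}"
  by (cases g) auto

lemma nbhd_superset_merge_Rv: "nbhd_superset (merge (Rv g a)) = gadget_verts g"
  using merge_Rv_cases[of g a] unfolding nbhd_superset_def by auto

lemma merge_Rv_in_gadget_verts: "a \<in> {1..k} \<Longrightarrow> merge (Rv g a) \<in> gadget_verts g"
  using merge_Rv_cases[of g a] k_ge_3 unfolding gadget_verts_def by auto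

lemma raw_edge_in_nbhd_superset:
  assumes "(x, y) \<in> raw_edges I e k"
  shows "merge y \<in> nbhd_superset (merge x) \<and> merge x \<in> nbhd_superset (merge y)"
  using assms
proof (cases rule: raw_edge_cases)
  case (window a b t)
  then have "b \<in> {a - k..a + k}" "a \<in> {b - k..b + k}" by auto
  then have "Zv b \<in> Zv ` {a - k..a + k}" "Zv a \<in> Zv ` {b - k..b + k}" by blast+
  then show ?thesis using window unfolding nbhd_superset_def by auto
next
  case (gadget g)
  obtain i c i' c' where g: "g = (i, c, i', c')" by (cases g)
  from g gadget(2) show ?thesis
  proof (cases rule: gadget_edge_cases)
    case (left_clique a b)
    then show ?thesis unfolding nbhd_superset_def gadget_verts_def by auto
  next
    case (right_clique a b)
    then show ?thesis using nbhd_superset_merge_Rv merge_Rv_in_gadget_verts by auto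
  next
    case left_pigeon
    then show ?thesis using gadget(1) g unfolding nbhd_superset_def gadget_verts_def by auto
  next
    case (left_precol a)
    have "PLv g \<in> precol I e k" using gadget(1) unfolding precol_def by blast
    then have "Lv g a \<in> nbhd_superset (Zv (zidx k os (PLv g)))"
      using left_precol k_ge_3 unfolding nbhd_superset_def gadget_verts_def by force
    moreover have "Zv (zidx k os (PLv g)) \<in> nbhd_superset (Lv g a)"
      unfolding nbhd_superset_def gadget_verts_def by auto
    ultimately show ?thesis using left_precol by simp
  next
    case right_pigeon
    then show ?thesis using gadget(1) g k_ge_3 merge_Rv[of 1 g]
      unfolding nbhd_superset_def gadget_verts_def by auto
  next
    case (right_precol a)
    have "PRv g \<in> precol I e k" using gadget(1) unfolding precol_def by blast
    moreover have "merge (Rv g a) = Rv g a" using right_precol k_ge_3 by (intro merge_Rv) linarith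
    ultimately have "merge (Rv g a) \<in> nbhd_superset (Zv (zidx k os (PRv g)))"
      using right_precol k_ge_3 unfolding nbhd_superset_def gadget_verts_def by force
    moreover have "Zv (zidx k os (PRv g)) \<in> nbhd_superset (merge (Rv g a))"
      using nbhd_superset_merge_Rv unfolding gadget_verts_def by auto
    ultimately show ?thesis using right_precol by simp
  next
    case ends
    then show ?thesis using nbhd_superset_merge_Rv merge_Rv_in_gadget_verts k_ge_3
      unfolding nbhd_superset_def gadget_verts_def by auto
  qed
qed

lemma neighbours_subset_nbhd_superset: "{w. (v, w) \<in> E \<or> (w, v) \<in> E} \<subseteq> nbhd_superset v"
proof
  fix w assume "w \<in> {w. (v, w) \<in> E \<or> (w, v) \<in> E}"
  then obtain x y where "(x, y) \<in> raw_edges I e k"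
    "(v, w) = (merge x, merge y) \<or> (w, v) = (merge x, merge y)"
    unfolding G_edges_def by auto
  then show "w \<in> nbhd_superset v" using raw_edge_in_nbhd_superset by auto
qed

lemma finite_gadget_verts: "finite (gadget_verts g)"
  unfolding gadget_verts_def by simp

lemma card_gadget_verts: "card (gadget_verts g) \<le> 2 * k + 4"
proof -
  have "card (gadget_verts g) \<le> card (Lv g ` {1..k}) + card (Rv g ` {1..k}) +
      card {Pig (fst g), Pig (fst (snd (snd g))), Zv (zidx k os (PLv g)), Zv (zidx k os (PRv g))}"
    unfolding gadget_verts_def by (meson card_Un_le add_right_mono le_trans)
  also have "\<dots> \<le> k + k + 4"
    using card_image_le[of "{1..k}" "Lv g"] card_image_le[of "{1..k}" "Rv g"]
      card_insert_le_m1 by (simp add: card_insert_if)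
  finally show ?thesis by simp
qed

lemma card_precol_at: "card {x \<in> precol I e k. zidx k os x = t} \<le> 1"
proof -
  have "inj_on (zidx k os) (precol I e k)"
    using zidx_inj_on[OF distinct_os] set_os pcol_precol by simp
  then show ?thesis using finite_precol by (simp add: card_le_Suc0_iff_eq inj_on_def)
qed

lemma finite_nbhd_superset: "finite (nbhd_superset v)"
  unfolding nbhd_superset_def
  using finite_gadgets finite_precol finite_gadget_verts by (simp split: vert.split)

lemma card_nbhd_superset_Pig: "card (nbhd_superset (Pig i)) \<le> 2 * d * k ^ 2"
proof -
  have "card (nbhd_superset (Pig i)) \<le>
      card ((\<lambda>g. Lv g 1) ` {g \<in> gad. fst g = i}) +
      card ((\<lambda>g. Rv g 1) ` {g \<in> gad. fst (snd (snd g)) = i})"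
    unfolding nbhd_superset_def by (simp add: card_Un_le)
  also have "\<dots> \<le> card {g \<in> gad. fst g = i} + card {g \<in> gad. fst (snd (snd g)) = i}"
    by (intro add_mono card_image_le) (simp_all add: finite_gadgets)
  also have "\<dots> \<le> d * k * k + d * k * k" by (intro add_mono card_gadgets_from card_gadgets_to)
  also have "\<dots> = 2 * d * k ^ 2" by (simp add: power2_eq_square)
  finally show ?thesis .
qed

lemma card_nbhd_superset_Zv: "card (nbhd_superset (Zv t)) \<le> 4 * k + 5"
proof -
  let ?P = "{x \<in> precol I e k. zidx k os x = t}"
  let ?U = "\<Union>x \<in> ?P. gadget_verts (case x of PLv g \<Rightarrow> g | PRv g \<Rightarrow> g)"
  have "card ?U \<le> (\<Sum>x \<in> ?P. card (gadget_verts (case x of PLv g \<Rightarrow> g | PRv g \<Rightarrow> g)))"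
    by (rule card_UN_le) (simp add: finite_precol)
  also have "\<dots> \<le> (\<Sum>x \<in> ?P. 2 * k + 4)" by (rule sum_mono) (rule card_gadget_verts)
  also have "\<dots> \<le> 2 * k + 4" using card_precol_at by simp
  finally have "card ?U \<le> 2 * k + 4" .
  moreover have "card (Zv ` {t - k..t + k}) \<le> 2 * k + 1"
    using card_image_le[of "{t - k..t + k}" Zv] by simp
  moreover have "card (nbhd_superset (Zv t)) \<le> card (Zv ` {t - k..t + k}) + card ?U"
    unfolding nbhd_superset_def by (simp add: card_Un_le)
  ultimately show ?thesis by linarith
qed

lemma card_nbhd_superset: "card (nbhd_superset v) \<le> (6 * d + 6) * k ^ 2"
proof -
  have "3 * k \<le> k * k" using k_ge_3 by simp
  then have "4 * k + 5 \<le> 6 * k ^ 2" using k_ge_3 unfolding power2_eq_square by linarith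
  then have small: "4 * k + 5 \<le> (6 * d + 6) * k ^ 2" by (simp add: algebra_simps)
  have large: "2 * d * k ^ 2 \<le> (6 * d + 6) * k ^ 2" by (intro mult_right_mono) simp_all
  show ?thesis
  proof (cases v)
    case (Pig i)
    then show ?thesis using card_nbhd_superset_Pig large by (metis le_trans)
  next
    case (Zv t)
    then show ?thesis using card_nbhd_superset_Zv small by (metis le_trans)
  next
    case (Lv g a)
    then have "card (nbhd_superset v) \<le> 2 * k + 4"
      using card_gadget_verts unfolding nbhd_superset_def by simp
    with small show ?thesis by linarith
  next
    case (Rv g a)
    then have "card (nbhd_superset v) \<le> 2 * k + 4"
      using card_gadget_verts unfolding nbhd_superset_def by simp
    with small show ?thesis by linarith
  qed (simp_all add: nbhd_superset_def)
qed

lemma vdegree_le: "vdegree E v \<le> (6 * d + 6) * k ^ 2"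
  unfolding vdegree_def
  using card_mono[OF finite_nbhd_superset neighbours_subset_nbhd_superset] card_nbhd_superset
  by (rule le_trans)

lemma G_properties:
  "card V \<le> (6 * d + 6) * k ^ 4 * card I \<and> (\<forall>v \<in> V. vdegree E v \<le> (6 * d + 6) * k ^ 2)
     \<and> (k_colourable k V E \<longleftrightarrow> php_sat I N)"
  using card_G_verts vdegree_le conflict_free_if_colourable colourable_if_conflict_free
    php_sat_iff_conflict_free by blast

end

(* The constant C = 6 d + 6 is supplied by unification with G_properties. *)
theorem proposition3p4:
  shows "\<forall>d :: nat. \<exists>C :: nat. \<forall>k I J N e os.
     k \<ge> 3 \<and> finite I \<and> finite J
     \<and> (\<forall>i \<in> I. N i \<subseteq> J \<and> card (N i) = k)
     \<and> (\<forall>j \<in> J. card {i \<in> I. j \<in> N i} \<le> d * k)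
     \<and> (\<forall>i \<in> I. bij_betw (e i) {1..k} (N i))
     \<and> distinct os \<and> set os = precol I e k
     \<longrightarrow> card (G_verts I e k os) \<le> C * k ^ 4 * card I
       \<and> (\<forall>v \<in> G_verts I e k os. vdegree (G_edges I e k os) v \<le> C * k ^ 2)
       \<and> (k_colourable k (G_verts I e k os) (G_edges I e k os) \<longleftrightarrow> php_sat I N)"
  by (intro allI exI impI, elim conjE) (rule php_graph.G_properties, unfold_locales)

end
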